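(* Let $k\ge 2$ and $\ell\ge 2$ be integers, and let $H(x)=B_{k+1}(\ell x+1)-B_{k+1}(x+1)\in\mathbb{Q}[x]$. Then $H(x)$ has at least three distinct complex roots.
   Context: $B_q(x)=\sum_{i=0}^{q}\binom{q}{i}B_i x^{q-i}$ denotes the $q$-th Bernoulli polynomial, where $B_i$ are the Bernoulli numbers with $B_0=1$, $B_1=-1/2$, $B_2=1/6$, $\dots$. For every integer $m\ge 1$ one has $H(m)=(k+1)\sum_{j=m+1}^{\ell m} j^k$. *)

theory Defs
  imports Complex_Main "HOL-Computational_Algebra.Polynomial"
begin

fun bernoulli_num :: "nat \<Rightarrow> rat" where
  "bernoulli_num n =
     (if n = 0 then 1
      else - (\<Sum>i<n. of_nat ((n + 1) choose i) * bernoulli_num i) / of_nat (n + 1))"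

declare bernoulli_num.simps [simp del]

definition bernoulli_poly :: "nat \<Rightarrow> rat poly" where
  "bernoulli_poly q = (\<Sum>i\<le>q. monom (of_nat (q choose i) * bernoulli_num i) (q - i))"

definition H_poly :: "nat \<Rightarrow> nat \<Rightarrow> rat poly" where
  "H_poly k l = pcompose (bernoulli_poly (k + 1)) [:1, of_nat l:]
              - pcompose (bernoulli_poly (k + 1)) [:1, 1:]"

lemma "bernoulli_num 1 = -1/2" "bernoulli_num 2 = 1/6"
  by (simp_all add: bernoulli_num.simps numeral_eq_Suc)

end

theory Submission
  imports Defs "HOL-Computational_Algebra.Fundamental_Theorem_Algebra"
begin

text \<open>
  Write q = k + 1. Since B_q(l x + 1) is B_q(x + 1) composed with l x, the coefficient of
  x^(q - t) in H is (l^(q - t) - 1) C(q, t) B_t(1); as B_3(1) = 0, the coefficient of x^(q - 3)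
  vanishes while the three above it do not. Also H(0) = 0. If H had at most two roots it would
  be c x^a (x - r)^b, and the vanishing coefficient forces b = 2, whence the coefficients
  satisfy c_(q-1)^2 = 4 c_q c_(q-2). This reduces to
  3 q (l^(q-1) - 1)^2 = 4 (q - 1) (l^q - 1) (l^(q-2) - 1), which fails for l \<ge> 2.
\<close>

lemma pcompose_monom: "pcompose (monom c n) q = smult c (q ^ n)"
  for c :: "'a::comm_semiring_1"
  by (induction n) (simp_all add: monom_0 monom_Suc pcompose_pCons pcompose_smult pcompose_mult mult.commute)

lemma coeff_one_plus_X_power: "coeff ([:1, 1:] ^ n) j = of_nat (n choose j)"
  by (cases "j \<le> n") (simp_all add: coeff_linear_poly_power coeff_eq_0 degree_linear_power binomial_eq_0)

lemma complex_poly_factor_two_roots: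
  fixes p :: "complex poly"
  assumes "p \<noteq> 0" and "{z. poly p z = 0} \<subseteq> {0, r}"
  obtains a b where "p = smult (lead_coeff p) (monom 1 a * [:-r, 1:] ^ b)"
proof -
  have "p = smult (lead_coeff p) (\<Prod>z | poly p z = 0. [:-z, 1:] ^ order z p)"
    by (rule complex_poly_decompose[symmetric])
  also have "(\<Prod>z | poly p z = 0. [:-z, 1:] ^ order z p) = (\<Prod>z\<in>{0, r}. [:-z, 1:] ^ order z p)"
    by (rule prod.mono_neutral_left) (use assms in \<open>auto simp: order_root\<close>)
  also have "\<dots> = monom 1 (order 0 p) * [:-r, 1:] ^ (if r = 0 then 0 else order r p)"
    by (cases "r = 0") (simp_all add: monom_altdef)
  finally show ?thesis by (rule that)
qed

lemma complex_poly_two_roots_top_coeffs: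
  fixes p :: "complex poly"
  assumes roots: "{z. poly p z = 0} \<subseteq> {0, r}" and deg: "degree p = m + 3"
    and c1: "coeff p (m + 2) \<noteq> 0" and c2: "coeff p (m + 1) \<noteq> 0" and c3: "coeff p m = 0"
  shows "coeff p (m + 2) ^ 2 = 4 * lead_coeff p * coeff p (m + 1)"
proof -
  define c where "c = lead_coeff p"
  have "p \<noteq> 0" using deg by auto
  then obtain a b where p: "p = smult c (monom 1 a * [:-r, 1:] ^ b)"
    using roots complex_poly_factor_two_roots unfolding c_def by blast
  have "c \<noteq> 0" using \<open>p \<noteq> 0\<close> by (simp add: c_def)
  then have "degree p = a + b"
    by (simp add: p degree_mult_eq degree_monom_eq degree_linear_power)
  then have ab: "a + b = m + 3" using deg by simp
  have below: "coeff p i = 0" if "i < a" for i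
    using that by (simp add: p coeff_monom_mult)
  have top: "coeff p (m + 3 - j) = c * of_nat (b choose j) * (-r) ^ j" if "j \<le> b" for j
  proof -
    have "m + 3 - j = a + (b - j)" using ab that by simp
    moreover have "b choose (b - j) = b choose j"
      using binomial_symmetric[OF that] by simp
    ultimately show ?thesis
      using that by (simp add: p coeff_monom_mult coeff_linear_poly_power)
  qed
  have "b \<ge> 2"
    using below[of "m + 1"] ab c2 by fastforce
  have "r \<noteq> 0"
    using top[of 1] \<open>b \<ge> 2\<close> c1 by (auto simp: numeral_eq_Suc)
  have "b = 2"
  proof (rule ccontr)
    assume "b \<noteq> 2"
    with \<open>b \<ge> 2\<close> have "coeff p m = c * of_nat (b choose 3) * (-r) ^ 3"
      using top[of 3] by simp
    moreover have "b choose 3 \<noteq> 0" using \<open>b \<ge> 2\<close> \<open>b \<noteq> 2\<close> by simp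
    ultimately show False using c3 \<open>c \<noteq> 0\<close> \<open>r \<noteq> 0\<close> by simp
  qed
  then show ?thesis
    using top[of 1] top[of 2] by (simp add: c_def numeral_eq_Suc power2_eq_square)
qed

lemma power_minus_one_relation_neq:
  fixes L :: "'a::linordered_idom" and m :: nat
  assumes L: "L \<ge> 2"
  shows "3 * (of_nat m + 3) * (L ^ (m + 2) - 1) ^ 2 \<noteq> 4 * (of_nat m + 2) * (L ^ (m + 3) - 1) * (L ^ (m + 1) - 1)"
proof -
  define u where "u = L ^ (m + 1)"
  define Y where "Y = (L * u - 1) ^ 2"
  define D where "D = u * (L - 1) ^ 2"
  \<comment> \<open>The relation becomes \<open>(m - 1) Y = 4 (m + 2) D\<close>: the left side is too small for
    \<open>m \<le> 1\<close>, and too large for \<open>m \<ge> 2\<close> because \<open>L (L u - 1) \<ge> (L\<^sup>2 - 1) u\<close>.\<close>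
  have powers: "L ^ (m + 2) = L * u" "L ^ (m + 3) = L ^ 2 * u"
    by (simp_all add: u_def power_add[symmetric] numeral_eq_Suc)
  have gap: "(L ^ 2 * u - 1) * (u - 1) = Y - D"
    unfolding Y_def D_def by (simp add: algebra_simps power2_eq_square)
  have "4 * (of_nat m + 2) * (L ^ (m + 3) - 1) * (L ^ (m + 1) - 1) - 3 * (of_nat m + 3) * (L ^ (m + 2) - 1) ^ 2
      = 4 * (of_nat m + 2) * ((L ^ 2 * u - 1) * (u - 1)) - 3 * (of_nat m + 3) * Y"
    unfolding powers Y_def u_def[symmetric] by (simp add: mult.assoc)
  also have "\<dots> = (of_nat m - 1) * Y - 4 * (of_nat m + 2) * D"
    unfolding gap by (simp add: algebra_simps)
  finally have reduce: "4 * (of_nat m + 2) * (L ^ (m + 3) - 1) * (L ^ (m + 1) - 1) - 3 * (of_nat m + 3) * (L ^ (m + 2) - 1) ^ 2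
      = (of_nat m - 1) * Y - 4 * (of_nat m + 2) * D" .
  have "u \<ge> L"
    using L power_increasing[of 1 "m + 1" L] by (simp add: u_def)
  have "D > 0" using L \<open>u \<ge> L\<close> by (simp add: D_def)
  have "(of_nat m - 1) * Y \<noteq> 4 * (of_nat m + 2) * D"
  proof (cases "m \<le> 1")
    case True
    then have "(of_nat m - 1) * Y \<le> 0"
      by (intro mult_nonpos_nonneg) (auto simp: Y_def)
    moreover have "4 * (of_nat m + 2) * D > 0" using \<open>D > 0\<close> by (intro mult_pos_pos) (simp_all add: add_nonneg_pos)
    ultimately show ?thesis by linarith
  next
    case False
    have "L * (L * u - 1) \<ge> (L ^ 2 - 1) * u"
      using \<open>u \<ge> L\<close> by (simp add: algebra_simps power2_eq_square)
    moreover have "(L ^ 2 - 1) * u \<ge> 0" using L \<open>u \<ge> L\<close> by simp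
    ultimately have "(L * (L * u - 1)) ^ 2 \<ge> ((L ^ 2 - 1) * u) ^ 2"
      by (rule power_mono)
    then have square: "L ^ 2 * Y \<ge> (L ^ 2 - 1) ^ 2 * u ^ 2"
      by (simp add: Y_def power_mult_distrib)
    have "(L ^ 2 - 1) ^ 2 \<ge> 9 * (L - 1) ^ 2"
    proof -
      have "(L + 1) ^ 2 \<ge> 3 ^ 2" using L by (intro power_mono) simp_all
      then have "(L - 1) ^ 2 * (L + 1) ^ 2 \<ge> (L - 1) ^ 2 * 9" by (intro mult_left_mono) simp_all
      then show ?thesis by (simp add: power2_eq_square algebra_simps)
    qed
    have "u \<ge> 2 * L ^ 2"
    proof -
      have "L ^ (m - 1) \<ge> L ^ 1" using L False by (intro power_increasing) simp_all
      then have "L ^ 2 * L ^ (m - 1) \<ge> L ^ 2 * 2" using L by (intro mult_left_mono) simp_all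
      moreover have "u = L ^ 2 * L ^ (m - 1)" using False by (simp add: u_def power_add[symmetric])
      ultimately show ?thesis by (simp add: mult.commute)
    qed
    have "L ^ 2 * (18 * D) = 9 * (L - 1) ^ 2 * u * (2 * L ^ 2)"
      by (simp add: D_def algebra_simps)
    also have "\<dots> \<le> 9 * (L - 1) ^ 2 * u * u"
      using \<open>u \<ge> 2 * L ^ 2\<close> \<open>u \<ge> L\<close> L by (intro mult_left_mono) simp_all
    also have "\<dots> = 9 * (L - 1) ^ 2 * u ^ 2"
      by (simp add: power2_eq_square mult.assoc)
    also have "\<dots> \<le> (L ^ 2 - 1) ^ 2 * u ^ 2"
      using \<open>(L ^ 2 - 1) ^ 2 \<ge> 9 * (L - 1) ^ 2\<close> by (rule mult_right_mono) simp
    also have "\<dots> \<le> L ^ 2 * Y" by (rule square)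
    finally have "L ^ 2 * (18 * D) \<le> L ^ 2 * Y" .
    then have "Y \<ge> 18 * D" using L by (simp add: mult_le_cancel_left)
    then have "(of_nat m - 1) * Y \<ge> (of_nat m - 1) * (18 * D)"
      using False by (intro mult_left_mono) simp_all
    moreover have "(of_nat m - 1) * (18 * D) > 4 * (of_nat m + 2) * D"
    proof -
      obtain j where "m = j + 2" using False by (intro that[of "m - 2"]) simp
      then have "(2::'a) \<le> of_nat m" by simp
      then have "(14 * of_nat m - 26) * D > 0" using \<open>D > 0\<close> by (intro mult_pos_pos) linarith+
      then show ?thesis by (simp add: algebra_simps)
    qed
    ultimately show ?thesis by linarith
  qed
  with reduce show ?thesis by (simp add: algebra_simps)
qed

lemma subset_pair_if_card_le_2:
  assumes "finite S" "card S \<le> 2" "a \<in> S"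
  obtains b where "S \<subseteq> {a, b}"
proof -
  have "card (S - {a}) \<le> Suc 0" using assms by simp
  then have "\<forall>x\<in>S - {a}. \<forall>y\<in>S - {a}. x = y"
    using assms(1) by (simp add: card_le_Suc0_iff_eq)
  then show ?thesis using that by blast
qed

lemma coeff_bernoulli_poly_shift:
  "coeff (pcompose (bernoulli_poly q) [:1, 1:]) j =
     (\<Sum>i\<le>q. of_nat (q choose i) * bernoulli_num i * of_nat ((q - i) choose j))"
  by (simp add: bernoulli_poly_def pcompose_sum coeff_sum pcompose_monom coeff_one_plus_X_power)

lemma coeff_bernoulli_poly_shift_top:
  assumes "t \<le> q"
  shows "coeff (pcompose (bernoulli_poly q) [:1, 1:]) (q - t) =
           of_nat (q choose t) * poly (bernoulli_poly t) 1"
proof -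
  have "coeff (pcompose (bernoulli_poly q) [:1, 1:]) (q - t) =
        (\<Sum>i\<le>t. of_nat (q choose i) * bernoulli_num i * of_nat ((q - i) choose (q - t)))"
    unfolding coeff_bernoulli_poly_shift
    by (rule sum.mono_neutral_right) (use assms in \<open>auto simp: binomial_eq_0\<close>)
  also have "\<dots> = (\<Sum>i\<le>t. of_nat (q choose t) * (of_nat (t choose i) * bernoulli_num i))"
  proof (rule sum.cong)
    fix i assume "i \<in> {..t}"
    then have "i \<le> t" by simp
    have "(q - i) choose (q - t) = (q - i) choose (t - i)"
      using \<open>i \<le> t\<close> assms by (subst binomial_symmetric) (auto simp: diff_diff_eq)
    moreover have "(q choose i) * ((q - i) choose (t - i)) = (q choose t) * (t choose i)"
      using choose_mult[OF \<open>i \<le> t\<close> assms] by simp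
    ultimately show "of_nat (q choose i) * bernoulli_num i * of_nat ((q - i) choose (q - t)) =
        of_nat (q choose t) * (of_nat (t choose i) * bernoulli_num i)"
      by (metis (no_types, lifting) mult.assoc mult.commute of_nat_mult)
  qed simp
  finally show ?thesis
    by (simp add: bernoulli_poly_def poly_sum poly_monom sum_distrib_left)
qed

lemma bernoulli_poly_at_1:
  "poly (bernoulli_poly 0) 1 = 1" "poly (bernoulli_poly 1) 1 = 1/2"
  "poly (bernoulli_poly 2) 1 = 1/6" "poly (bernoulli_poly 3) 1 = 0"
  by (simp_all add: bernoulli_poly_def poly_sum poly_monom bernoulli_num.simps numeral_eq_Suc)

lemma coeff_H_poly:
  "coeff (H_poly k l) j = (of_nat l ^ j - 1) * coeff (pcompose (bernoulli_poly (k + 1)) [:1, 1:]) j"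
proof -
  have "pcompose p [:1, of_nat l:] = pcompose (pcompose p [:1, 1:]) [:0, of_nat l:]" for p :: "rat poly"
    by (simp add: pcompose_assoc[symmetric] pcompose_pCons)
  then show ?thesis
    by (simp add: H_poly_def coeff_pcompose_linear algebra_simps)
qed

lemma coeff_H_poly_top:
  "t \<le> k + 1 \<Longrightarrow> coeff (H_poly k l) (k + 1 - t) =
     (of_nat l ^ (k + 1 - t) - 1) * of_nat ((k + 1) choose t) * poly (bernoulli_poly t) 1"
  by (simp add: coeff_H_poly coeff_bernoulli_poly_shift_top)

lemma degree_H_poly:
  assumes "l \<ge> 2"
  shows "degree (H_poly k l) = k + 1"
proof (rule antisym)
  show "degree (H_poly k l) \<le> k + 1"
    by (rule degree_le) (auto simp: coeff_H_poly coeff_bernoulli_poly_shift binomial_eq_0)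
  have "(1::rat) < of_nat l ^ (k + 1)"
    using assms by (intro one_less_power) simp_all
  then have "coeff (H_poly k l) (k + 1) \<noteq> 0"
    using coeff_H_poly_top[of 0 k l] by (simp add: bernoulli_poly_at_1)
  then show "k + 1 \<le> degree (H_poly k l)" by (rule le_degree)
qed

lemma poly_H_poly_0: "poly (H_poly k l) 0 = 0"
  by (simp add: poly_0_coeff_0 coeff_H_poly)

lemma H_poly_top_coeffs:
  fixes m l :: nat
  defines "c \<equiv> coeff (H_poly (m + 2) l)"
  assumes "l \<ge> 2"
  shows "c (m + 2) \<noteq> 0" and "c (m + 1) \<noteq> 0" and "c m = 0"
    and "c (m + 2) ^ 2 \<noteq> 4 * c (m + 3) * c (m + 1)"
proof -
  define L where "L = (of_nat l :: rat)"
  have pos: "L ^ j - 1 > 0" if "j > 0" for j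
    using assms(2) that by (simp add: L_def one_less_power)
  have top: "c (m + 3 - t) = (L ^ (m + 3 - t) - 1) * of_nat ((m + 3) choose t) * poly (bernoulli_poly t) 1"
    if "t \<le> 3" for t
    using coeff_H_poly_top[of t "m + 2" l] that by (simp add: c_def L_def numeral_eq_Suc)
  have "2 * ((m + 3) choose 2) = (m + 3) * (m + 2)" by (simp add: choose_two)
  then have "2 * rat_of_nat ((m + 3) choose 2) = (of_nat m + 3) * (of_nat m + 2)"
    by (metis (mono_tags) of_nat_add of_nat_mult of_nat_numeral)
  then have choose_2: "rat_of_nat ((m + 3) choose 2) = (of_nat m + 3) * (of_nat m + 2) / 2"
    by simp
  have c: "c (m + 3) = L ^ (m + 3) - 1"
    "c (m + 2) = (L ^ (m + 2) - 1) * (of_nat m + 3) / 2"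
    "c (m + 1) = (L ^ (m + 1) - 1) * (of_nat m + 3) * (of_nat m + 2) / 12"
    "c m = 0"
    using top[of 0, unfolded bernoulli_poly_at_1] top[of 1, unfolded bernoulli_poly_at_1]
      top[of 2, unfolded bernoulli_poly_at_1] top[of 3, unfolded bernoulli_poly_at_1]
    by (simp_all add: choose_2)
  show "c (m + 2) \<noteq> 0" unfolding c using pos[of "m + 2"] by simp
  show "c (m + 1) \<noteq> 0" unfolding c using pos[of "m + 1"] by simp
  show "c m = 0" by (fact c)
  show "c (m + 2) ^ 2 \<noteq> 4 * c (m + 3) * c (m + 1)"
  proof
    assume "c (m + 2) ^ 2 = 4 * c (m + 3) * c (m + 1)"
    then have "(of_nat m + 3) * (3 * (of_nat m + 3) * (L ^ (m + 2) - 1) ^ 2) =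
        (of_nat m + 3) * (4 * (of_nat m + 2) * (L ^ (m + 3) - 1) * (L ^ (m + 1) - 1))"
      unfolding c by (simp add: field_simps power2_eq_square)
    then have "3 * (of_nat m + 3) * (L ^ (m + 2) - 1) ^ 2 =
        4 * (of_nat m + 2) * (L ^ (m + 3) - 1) * (L ^ (m + 1) - 1)"
      by (simp del: of_nat_add)
    moreover have "L \<ge> 2" using assms(2) by (simp add: L_def)
    ultimately show False using power_minus_one_relation_neq by blast
  qed
qed

theorem mainTheorem2:
  fixes k l :: nat
  assumes "k \<ge> 2" and "l \<ge> 2"
  shows "card {z :: complex. poly (map_poly of_rat (H_poly k l)) z = 0} \<ge> 3"
proof (rule ccontr)
  define P :: "complex poly" where "P = map_poly of_rat (H_poly k l)"
  assume "\<not> ?thesis"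
  then have "card {z. poly P z = 0} \<le> 2" by (simp add: P_def)
  obtain m where k: "k = m + 2" using assms(1) by (intro that[of "k - 2"]) simp
  have coeff_P: "coeff P j = of_rat (coeff (H_poly (m + 2) l) j)" for j
    by (simp add: P_def coeff_map_poly k)
  have deg: "degree P = m + 3"
    using assms(2) by (simp add: P_def degree_map_poly degree_H_poly k)
  then have "finite {z. poly P z = 0}" by (intro poly_roots_finite) auto
  moreover have "poly P 0 = 0"
    using poly_H_poly_0[of "m + 2" l] by (simp add: poly_0_coeff_0 coeff_P)
  ultimately obtain r where roots: "{z. poly P z = 0} \<subseteq> {0, r}"
    using \<open>card {z. poly P z = 0} \<le> 2\<close> by (auto elim: subset_pair_if_card_le_2)
  note H_coeffs = H_poly_top_coeffs[OF assms(2), of m]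
  have "coeff P (m + 2) ^ 2 = 4 * lead_coeff P * coeff P (m + 1)"
    using H_coeffs(1-3) by (intro complex_poly_two_roots_top_coeffs[OF roots deg]) (simp_all add: coeff_P)
  then have "of_rat (coeff (H_poly (m + 2) l) (m + 2) ^ 2) =
      (of_rat (4 * coeff (H_poly (m + 2) l) (m + 3) * coeff (H_poly (m + 2) l) (m + 1)) :: complex)"
    by (simp add: deg coeff_P of_rat_mult of_rat_power)
  with H_coeffs(4) show False by (simp only: of_rat_eq_iff)
qed

end
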